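(* Let $m$ be a positive integer and $a,b\in\mathbb{F}_{2^{3m}}^*$. Put $A=a^{2^{2m}+2^m+1}+1$ and $B=a^{2^{2m}}b^{2^m}+a^{2^{2m}+2^m}b+b^{2^{2m}}$. Then the equation $x^{2^m}+ax+b=0$ (in $x\in\mathbb{F}_{2^{3m}}$): (i) has at most one solution, namely possibly $x=B/A$, when $A\neq 0$; (ii) has exactly $2^m$ solutions when $A=0$ and $B=0$; (iii) has no solutions when $A=0$ and $B\neq 0$. *)

theory Defs
  imports Main
begin

end

theory Submission
  imports Defs "HOL-Number_Theory.Residues" "HOL-Computational_Algebra.Polynomial"
begin

text \<open>
  Write \<open>q = 2^m\<close> and \<open>L x = x^q + a x\<close>, an additive map on \<open>GF(q^3)\<close>, so the equation
  reads \<open>L x = b\<close>. Composing \<open>L\<close> with \<open>C y = a^(q^2) y^q + a^(q^2+q) y + y^(q^2)\<close> kills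
  the intermediate Frobenius powers in characteristic 2 and leaves \<open>x^(q^3) + a^(q^2+q+1) x = A x\<close>.
  Hence every solution satisfies \<open>A x = C b = B\<close>, which settles (i) and (iii). If \<open>A = 0\<close>,
  then \<open>C\<close> vanishes on the image of \<open>L\<close>; the kernel of \<open>L\<close> has at most \<open>q\<close> and the roots
  of \<open>C\<close> at most \<open>q^2\<close> elements, so \<open>q^3 = |im L| |ker L|\<close> forces the image to be exactly
  the root set of \<open>C\<close>. Thus \<open>B = 0\<close> puts \<open>b\<close> in the image, and its fibre is a coset of
  the kernel, of size \<open>q\<close>.
\<close>

lemma CHAR_eq_2_if_card_UNIV_eq_power_2:
  assumes "card (UNIV :: 'a :: {idom, finite} set) = 2 ^ k" "k > 0"
  shows "CHAR('a) = 2"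
proof -
  have "prime CHAR('a)"
    by (intro prime_CHAR_semidom finite_imp_CHAR_pos) simp
  moreover have "CHAR('a) dvd 2 ^ k"
    using CHAR_dvd_CARD[where 'a = 'a] assms(1) by simp
  ultimately have "CHAR('a) dvd 2"
    using prime_dvd_power by blast
  with \<open>prime CHAR('a)\<close> show ?thesis
    using primes_dvd_imp_eq[of "CHAR('a)" 2] by simp
qed

lemma add_power_two_power_CHAR_2:
  fixes x y :: "'a :: comm_ring_1"
  assumes "CHAR('a) = 2"
  shows "(x + y) ^ (2 ^ k) = x ^ (2 ^ k) + y ^ (2 ^ k)"
  using freshmans_dream'[where x = x and y = y and m = "2 ^ k" and n = k] assms by simp

lemma power_card_UNIV_eq:
  fixes x :: "'a :: {field, finite}"
  shows "x ^ card (UNIV :: 'a set) = x"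
proof (cases "x = 0")
  case False
  have "x ^ card (UNIV - {0 :: 'a}) * \<Prod>(UNIV - {0 :: 'a}) = (\<Prod>y\<in>UNIV - {0}. x * y)"
    by (simp add: prod.distrib)
  also have "\<dots> = \<Prod>(UNIV - {0})"
    by (rule prod.reindex_bij_witness[of _ "\<lambda>y. y / x" "\<lambda>y. x * y"]) (use False in auto)
  finally have "x ^ card (UNIV - {0 :: 'a}) = 1"
    by simp
  moreover have "card (UNIV :: 'a set) = Suc (card (UNIV - {0 :: 'a}))"
    using finite_UNIV_card_ge_0[where 'a = 'a] by (simp add: card_Diff_singleton)
  ultimately show ?thesis
    by (metis power_Suc mult_1_right)
qed (simp add: finite_UNIV_card_ge_0)

lemma card_roots_trinomial_le:
  fixes c d :: "'a :: field"
  assumes "k < n" "j < n"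
  shows "card {x. x ^ n + c * x ^ k + d * x ^ j = 0} \<le> n"
proof -
  define p where "p = monom 1 n + monom c k + monom d j"
  have "coeff p n = 1" "degree p \<le> n"
    using assms by (auto simp: p_def intro!: degree_le)
  then have "card {x. poly p x = 0} \<le> n"
    using card_poly_roots_bound[of p] by fastforce
  then show ?thesis
    by (simp add: p_def poly_monom)
qed

lemma additive_vimage_eq_translate_kernel:
  assumes "additive f"
  shows "f -` {f c} = (+) c ` (f -` {0})"
proof
  show "f -` {f c} \<subseteq> (+) c ` (f -` {0})"
  proof
    fix x assume "x \<in> f -` {f c}"
    then have "x = c + (x - c)" "f (x - c) = 0"
      by (simp_all add: additive.diff[OF assms])
    then show "x \<in> (+) c ` (f -` {0})"
      by blast
  qed
qed (auto simp: additive.add[OF assms])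

lemma additive_card_vimage_eq_card_kernel:
  fixes f :: "'a :: {ab_group_add, finite} \<Rightarrow> 'b :: ab_group_add"
  assumes "additive f" "y \<in> range f"
  shows "card (f -` {y}) = card (f -` {0})"
  using assms by (auto simp: additive_vimage_eq_translate_kernel card_image)

lemma additive_card_UNIV_eq:
  fixes f :: "'a :: {ab_group_add, finite} \<Rightarrow> 'b :: ab_group_add"
  assumes "additive f"
  shows "card (UNIV :: 'a set) = card (range f) * card (f -` {0})"
proof -
  have "card (UNIV :: 'a set) = card (\<Union>y\<in>range f. f -` {y})"
    by (rule arg_cong[where f = card]) auto
  also have "\<dots> = (\<Sum>y\<in>range f. card (f -` {y}))"
    by (rule card_UN_disjoint) auto
  also have "\<dots> = card (range f) * card (f -` {0})"
    by (simp add: additive_card_vimage_eq_card_kernel[OF assms])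
  finally show ?thesis .
qed

lemma additive_card_vimage_eq_if_card_bounds:
  fixes f :: "'a :: {ab_group_add, finite} \<Rightarrow> 'b :: ab_group_add"
  assumes "additive f"
    and card: "card (UNIV :: 'a set) = r * s"
    and kernel: "card (f -` {0}) \<le> s"
    and range: "range f \<subseteq> R" "finite R" "card R \<le> r"
    and "y \<in> R"
  shows "card (f -` {y}) = s"
proof -
  have "card (range f) \<le> card R"
    using range by (intro card_mono)
  then have "card (range f) \<le> r"
    using range by simp
  moreover have "card (range f) * card (f -` {0}) = r * s"
    using card additive_card_UNIV_eq[OF assms(1)] by simp
  moreover have "r * s > 0"
    using card finite_UNIV_card_ge_0[where 'a = 'a] by simp
  ultimately have "card (range f) = r" "card (f -` {0}) = s"
    using kernel mult_le_mono[of "card (range f)" r "card (f -` {0})" s]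
    by (auto simp: order.order_iff_strict dest: mult_strict_mono[of _ r _ s])
  with \<open>card (range f) \<le> card R\<close> have "range f = R"
    using range by (intro card_subset_eq) auto
  then show ?thesis
    using \<open>y \<in> R\<close> \<open>card (f -` {0}) = s\<close> additive_card_vimage_eq_card_kernel[OF assms(1)] by simp
qed

definition lin_map :: "nat \<Rightarrow> 'a \<Rightarrow> 'a \<Rightarrow> 'a :: comm_ring_1" where
  "lin_map q a x = x ^ q + a * x"

definition lin_map_cofactor :: "nat \<Rightarrow> 'a \<Rightarrow> 'a \<Rightarrow> 'a :: comm_ring_1" where
  "lin_map_cofactor q a y = a ^ (q * q) * y ^ q + a ^ (q * q + q) * y + y ^ (q * q)"

lemma additive_lin_map:
  fixes a :: "'a :: comm_ring_1"
  assumes "CHAR('a) = 2" "q = 2 ^ k"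
  shows "additive (lin_map q a)"
  by standard (simp add: lin_map_def assms add_power_two_power_CHAR_2 algebra_simps)

lemma lin_map_cofactor_lin_map:
  fixes a x :: "'a :: comm_ring_1"
  assumes "CHAR('a) = 2" "q = 2 ^ k"
  shows "lin_map_cofactor q a (lin_map q a x) = a ^ (q * q + q + 1) * x + x ^ (q * q * q)"
proof -
  have frob: "(u + v) ^ q = u ^ q + v ^ q" for u v :: 'a
    using assms by (simp add: add_power_two_power_CHAR_2)
  have two: "(2 :: 'a) = 0"
    using of_nat_CHAR[where 'a = 'a] assms(1) by simp
  have q1: "(x ^ q + a * x) ^ q = x ^ (q * q) + a ^ q * x ^ q"
    by (simp add: frob power_mult_distrib power_mult)
  have q2: "(x ^ q + a * x) ^ (q * q) = x ^ (q * q * q) + a ^ (q * q) * x ^ (q * q)"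
    by (simp add: power_mult q1 frob power_mult_distrib)
  have "lin_map_cofactor q a (lin_map q a x)
      = 2 * (a ^ (q * q) * x ^ (q * q)) + 2 * (a ^ (q * q + q) * x ^ q)
        + a ^ (q * q + q + 1) * x + x ^ (q * q * q)"
    unfolding lin_map_cofactor_def lin_map_def q1 q2 by (simp add: algebra_simps power_add)
  then show ?thesis
    by (simp add: two)
qed

lemma card_vimage_lin_map_eq:
  fixes a y :: "'a :: {field, finite}"
  assumes "CHAR('a) = 2" "q = 2 ^ k" "k > 0"
    and "card (UNIV :: 'a set) = q * q * q"
    and "\<And>x. lin_map_cofactor q a (lin_map q a x) = 0"
    and "lin_map_cofactor q a y = 0"
  shows "card (lin_map q a -` {y}) = q"
proof (rule additive_card_vimage_eq_if_card_bounds)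
  have "q > 1"
    using assms(2,3) one_less_power[of "2 :: nat" k] by simp
  show "card (lin_map q a -` {0}) \<le> q"
    using card_roots_trinomial_le[of 1 q 0 a 0] \<open>q > 1\<close> by (simp add: lin_map_def vimage_def)
  show "card {y. lin_map_cofactor q a y = 0} \<le> q * q"
    using card_roots_trinomial_le[of q "q * q" 1 "a ^ (q * q)" "a ^ (q * q + q)"]
      \<open>q > 1\<close> less_1_mult[OF \<open>q > 1\<close> \<open>q > 1\<close>]
    by (simp add: lin_map_cofactor_def algebra_simps)
qed (use assms additive_lin_map in auto)

theorem lemma6:
  fixes a b :: "'a :: {field, finite}" and m :: nat
  assumes "m > 0"
    and "card (UNIV :: 'a set) = 2 ^ (3 * m)"
    and "a \<noteq> 0" and "b \<noteq> 0"
  defines "A \<equiv> a ^ (2 ^ (2 * m) + 2 ^ m + 1) + 1"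
    and "B \<equiv> a ^ (2 ^ (2 * m)) * b ^ (2 ^ m) + a ^ (2 ^ (2 * m) + 2 ^ m) * b + b ^ (2 ^ (2 * m))"
  shows "(A \<noteq> 0 \<longrightarrow> {x. x ^ (2 ^ m) + a * x + b = 0} \<subseteq> {B / A})
    \<and> (A = 0 \<and> B = 0 \<longrightarrow> card {x. x ^ (2 ^ m) + a * x + b = 0} = 2 ^ m)
    \<and> (A = 0 \<and> B \<noteq> 0 \<longrightarrow> {x. x ^ (2 ^ m) + a * x + b = 0} = {})"
proof -
  define q :: nat where "q = 2 ^ m"
  have char: "CHAR('a) = 2"
    using assms(1,2) by (intro CHAR_eq_2_if_card_UNIV_eq_power_2[of "3 * m"]) simp_all
  have card: "card (UNIV :: 'a set) = q * q * q"
    using assms(2) by (simp add: q_def power_mult[symmetric] power_add[symmetric])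
  have "(2 :: nat) ^ (2 * m) = q * q"
    by (simp add: q_def mult_2 power_add)
  then have AB: "A = a ^ (q * q + q + 1) + 1" "B = lin_map_cofactor q a b"
    unfolding A_def B_def lin_map_cofactor_def q_def[symmetric] by simp_all
  have key: "lin_map_cofactor q a (lin_map q a x) = A * x" for x
    using lin_map_cofactor_lin_map[OF char q_def, of a x] power_card_UNIV_eq[of x]
    by (simp add: card AB distrib_right)
  have solutions: "{x. x ^ (2 ^ m) + a * x + b = 0} = lin_map q a -` {b}"
    using uminus_CHAR_2[OF char, of b] by (auto simp: lin_map_def q_def add_eq_0_iff2)
  show ?thesis
    unfolding solutions
  proof (intro conjI impI)
    show "lin_map q a -` {b} \<subseteq> {B / A}" if "A \<noteq> 0"
      using that key AB by (auto simp: field_simps)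
    show "card (lin_map q a -` {b}) = 2 ^ m" if "A = 0 \<and> B = 0"
      using that key AB card assms(1) unfolding q_def
      by (intro card_vimage_lin_map_eq[OF char refl]) simp_all
    show "lin_map q a -` {b} = {}" if "A = 0 \<and> B \<noteq> 0"
      using that key AB by auto
  qed
qed

end
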